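(* For every finite point set $P$ in general position, the graph $G_\bigtriangledown(P)\cap G_\bigtriangleup(P)$ (vertex set $P$, edge set the intersection of the edge sets) is connected.
   Context: A finite point set $P$ in the plane is in general position if no line through two points of $P$ makes an angle of $0^\circ$, $60^\circ$ or $120^\circ$ with the horizontal. A down-triangle (resp. up-triangle) is an equilateral triangle with one side parallel to the $x$-axis and the corner opposite to this side below (resp. above) that side. $G_\bigtriangledown(P)$ (resp. $G_\bigtriangleup(P)$) is the graph with vertex set $P$ in which $p,q$ are adjacent iff some (closed) down-triangle (resp. up-triangle) contains $p$ and $q$ and no other point of $P$. *)

theory Defs
  imports Complex_Main
begin

type_synonym point = "real \<times> real"

text \<open>General position: no line through two distinct points of P has angle
0, 60 or 120 degrees with the horizontal, i.e. slope 0, sqrt 3 or -sqrt 3.\<close>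
definition general_position :: "point set \<Rightarrow> bool" where
  "general_position P \<longleftrightarrow>
     (\<forall>p\<in>P. \<forall>q\<in>P. p \<noteq> q \<longrightarrow>
        snd q - snd p \<noteq> 0 \<and>
        snd q - snd p \<noteq> sqrt 3 * (fst q - fst p) \<and>
        snd q - snd p \<noteq> - sqrt 3 * (fst q - fst p))"

text \<open>Closed down-triangle with bottom apex (ax, ay) and side length s > 0:
horizontal top side at height ay + s*sqrt 3/2.\<close>
definition down_triangle :: "real \<Rightarrow> real \<Rightarrow> real \<Rightarrow> point set" where
  "down_triangle ax ay s =
     {(x, y). ay \<le> y \<and> y \<le> ay + s * sqrt 3 / 2 \<and> \<bar>x - ax\<bar> \<le> (y - ay) / sqrt 3}"

text \<open>Closed up-triangle with top apex (ax, ay) and side length s > 0: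
horizontal bottom side at height ay - s*sqrt 3/2.\<close>
definition up_triangle :: "real \<Rightarrow> real \<Rightarrow> real \<Rightarrow> point set" where
  "up_triangle ax ay s =
     {(x, y). ay - s * sqrt 3 / 2 \<le> y \<and> y \<le> ay \<and> \<bar>x - ax\<bar> \<le> (ay - y) / sqrt 3}"

definition G_down :: "point set \<Rightarrow> point \<Rightarrow> point \<Rightarrow> bool" where
  "G_down P p q \<longleftrightarrow> p \<in> P \<and> q \<in> P \<and> p \<noteq> q \<and>
     (\<exists>ax ay s. s > 0 \<and> down_triangle ax ay s \<inter> P = {p, q})"

definition G_up :: "point set \<Rightarrow> point \<Rightarrow> point \<Rightarrow> bool" where
  "G_up P p q \<longleftrightarrow> p \<in> P \<and> q \<in> P \<and> p \<noteq> q \<and>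
     (\<exists>ax ay s. s > 0 \<and> up_triangle ax ay s \<inter> P = {p, q})"

definition connected_graph :: "'a set \<Rightarrow> ('a \<Rightarrow> 'a \<Rightarrow> bool) \<Rightarrow> bool" where
  "connected_graph V E \<longleftrightarrow>
     (\<forall>u\<in>V. \<forall>v\<in>V. (\<lambda>a b. a \<in> V \<and> b \<in> V \<and> E a b)\<^sup>*\<^sup>* u v)"

end

theory Submission
  imports Defs
begin

(* Use the three "triangular coordinates"
     tri1 p = 2y,   tri2 p = sqrt 3 x - y,   tri3 p = -sqrt 3 x - y,
   which sum to zero.  A closed down-triangle is exactly a set
   {tri1 \<le> c1, tri2 \<le> c2, tri3 \<le> c3} with c1 + c2 + c3 > 0, and an up-triangle a set
   {tri1 \<ge> c1, tri2 \<ge> c2, tri3 \<ge> c3} with c1 + c2 + c3 < 0.  Hence for p \<noteq> q the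
   smallest down-triangle (resp. up-triangle) containing p and q is obtained with
   c_i = max (resp. min) of the coordinates of p and q.  If it contains a further
   point r of P, then r is strictly closer to both p and q than p and q are to each
   other, in the hexagonal distance  tri_dist p q = \<Sum>i |tri_i p - tri_i q|
   (this is where general position is used).
   So any pair p, q that is not an edge of both graphs has such a "shortcut" r in P.
   A general lemma about finite sets with a distance shows that this property forces
   connectivity: induct on the number of pairs that are strictly closer than p, q. *)

section \<open>Connectivity from shortcuts\<close>

text \<open>If every non-adjacent pair u, v of a finite set has a third vertex strictly
closer to both ends, the graph is connected: induction on the number of pairs
of V that are closer than u, v.\<close>

lemma connected_graph_by_shortcuts:
  fixes V :: "'a set" and d :: "'a \<Rightarrow> 'a \<Rightarrow> real"
  assumes fin: "finite V"
    and shortcut: "\<And>u v. u \<in> V \<Longrightarrow> v \<in> V \<Longrightarrow> u \<noteq> v \<Longrightarrow> \<not> E u v \<Longrightarrow>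
                     \<exists>w\<in>V. d u w < d u v \<and> d w v < d u v"
  shows "connected_graph V E"
proof -
  define E' where "E' = (\<lambda>a b. a \<in> V \<and> b \<in> V \<and> E a b)"
  define closer where "closer u v = {(a, b) \<in> V \<times> V. d a b < d u v}" for u v
  have closer_fin: "finite (closer u v)" for u v
    unfolding closer_def by (rule finite_subset[of _ "V \<times> V"]) (use fin in auto)
  have closer_smaller: "card (closer a b) < card (closer u v)"
    if "a \<in> V" "b \<in> V" "d a b < d u v" for a b u v
  proof -
    have "closer a b \<subset> closer u v" unfolding closer_def using that by auto
    then show ?thesis using closer_fin psubset_card_mono by blast
  qed
  have "E'\<^sup>*\<^sup>* u v" if "u \<in> V" "v \<in> V" for u v
    using that
  proof (induction "card (closer u v)" arbitrary: u v rule: less_induct)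
    case less
    show ?case
    proof (cases "u = v \<or> E u v")
      case True
      then show ?thesis using less.prems unfolding E'_def by auto
    next
      case False
      then obtain w where w: "w \<in> V" "d u w < d u v" "d w v < d u v"
        using shortcut less.prems by blast
      have "E'\<^sup>*\<^sup>* u w" "E'\<^sup>*\<^sup>* w v"
        using less.hyps closer_smaller w less.prems by blast+
      then show ?thesis by (rule rtranclp_trans)
    qed
  qed
  then show ?thesis unfolding connected_graph_def E'_def by blast
qed

section \<open>Triangular coordinates and the hexagonal distance\<close>

text \<open>The three coordinates are the (scaled) signed distances to lines of slope
0, sqrt 3 and -sqrt 3; their sum vanishes identically.  The hexagonal distance is
the l1 distance in these coordinates.\<close>

definition tri1 :: "point \<Rightarrow> real" where "tri1 p = 2 * snd p"
definition tri2 :: "point \<Rightarrow> real" where "tri2 p = sqrt 3 * fst p - snd p"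
definition tri3 :: "point \<Rightarrow> real" where "tri3 p = - sqrt 3 * fst p - snd p"

definition tri_dist :: "point \<Rightarrow> point \<Rightarrow> real" where
  "tri_dist p q = \<bar>tri1 p - tri1 q\<bar> + \<bar>tri2 p - tri2 q\<bar> + \<bar>tri3 p - tri3 q\<bar>"

lemma tri_dist_sym: "tri_dist p q = tri_dist q p"
  by (simp add: tri_dist_def abs_minus_commute)

lemma tri_sum: "tri1 p + tri2 p + tri3 p = 0"
  by (simp add: tri1_def tri2_def tri3_def)

lemma general_position_tri:
  assumes "general_position P" "p \<in> P" "q \<in> P" "p \<noteq> q"
  shows "tri1 p \<noteq> tri1 q" "tri2 p \<noteq> tri2 q" "tri3 p \<noteq> tri3 q"
  using assms unfolding general_position_def tri1_def tri2_def tri3_def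
  by (auto simp: algebra_simps)

lemma hex_dist_decreases:
  fixes p1 p2 p3 q1 q2 q3 r1 r2 r3 :: real
  assumes "p1 + p2 + p3 = 0" "q1 + q2 + q3 = 0" "r1 + r2 + r3 = 0"
    and "q1 \<noteq> r1" "q2 \<noteq> r2" "q3 \<noteq> r3" "p1 \<noteq> q1"
    and "r1 \<le> max p1 q1" "r2 \<le> max p2 q2" "r3 \<le> max p3 q3"
  shows "\<bar>p1 - r1\<bar> + \<bar>p2 - r2\<bar> + \<bar>p3 - r3\<bar> < \<bar>p1 - q1\<bar> + \<bar>p2 - q2\<bar> + \<bar>p3 - q3\<bar>"
  using assms by (auto simp: abs_if max_def split: if_splits)

lemma tri_dist_decreases_max:
  assumes "general_position P" "p \<in> P" "q \<in> P" "r \<in> P" "p \<noteq> q" "r \<noteq> q"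
    and "tri1 r \<le> max (tri1 p) (tri1 q)" "tri2 r \<le> max (tri2 p) (tri2 q)"
      "tri3 r \<le> max (tri3 p) (tri3 q)"
  shows "tri_dist p r < tri_dist p q"
  unfolding tri_dist_def
  by (rule hex_dist_decreases[OF tri_sum tri_sum tri_sum])
     (use assms general_position_tri[of P] in auto)

lemma tri_dist_decreases_min:
  assumes "general_position P" "p \<in> P" "q \<in> P" "r \<in> P" "p \<noteq> q" "r \<noteq> q"
    and "tri1 r \<ge> min (tri1 p) (tri1 q)" "tri2 r \<ge> min (tri2 p) (tri2 q)"
      "tri3 r \<ge> min (tri3 p) (tri3 q)"
  shows "tri_dist p r < tri_dist p q"
proof -
  have "\<bar>- tri1 p - - tri1 r\<bar> + \<bar>- tri2 p - - tri2 r\<bar> + \<bar>- tri3 p - - tri3 r\<bar>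
      < \<bar>- tri1 p - - tri1 q\<bar> + \<bar>- tri2 p - - tri2 q\<bar> + \<bar>- tri3 p - - tri3 q\<bar>"
    by (rule hex_dist_decreases)
       (use assms general_position_tri[of P] tri_sum[of p] tri_sum[of q] tri_sum[of r] in auto)
  then show ?thesis unfolding tri_dist_def by (simp add: abs_minus_commute)
qed

section \<open>Triangles as intersections of coordinate half-planes\<close>

lemma down_triangle_tri:
  "down_triangle ax ay s =
     {p. tri1 p \<le> 2 * ay + s * sqrt 3 \<and> tri2 p \<le> sqrt 3 * ax - ay \<and> tri3 p \<le> - sqrt 3 * ax - ay}"
proof -
  have "(x, y) \<in> down_triangle ax ay s \<longleftrightarrow>
          2 * y \<le> 2 * ay + s * sqrt 3 \<and> sqrt 3 * x - y \<le> sqrt 3 * ax - ay \<and>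
          - sqrt 3 * x - y \<le> - sqrt 3 * ax - ay" for x y
  proof -
    have "\<bar>sqrt 3 * x - sqrt 3 * ax\<bar> = sqrt 3 * \<bar>x - ax\<bar>"
      by (simp flip: right_diff_distrib add: abs_mult)
    then have "\<bar>x - ax\<bar> \<le> (y - ay) / sqrt 3 \<longleftrightarrow> \<bar>sqrt 3 * x - sqrt 3 * ax\<bar> \<le> y - ay"
      by (simp add: pos_le_divide_eq mult.commute)
    then show ?thesis unfolding down_triangle_def by (auto simp: abs_le_iff)
  qed
  then show ?thesis by (auto simp: tri1_def tri2_def tri3_def)
qed

lemma up_triangle_tri:
  "up_triangle ax ay s =
     {p. tri1 p \<ge> 2 * ay - s * sqrt 3 \<and> tri2 p \<ge> sqrt 3 * ax - ay \<and> tri3 p \<ge> - sqrt 3 * ax - ay}"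
proof -
  have "(x, y) \<in> up_triangle ax ay s \<longleftrightarrow>
          2 * y \<ge> 2 * ay - s * sqrt 3 \<and> sqrt 3 * x - y \<ge> sqrt 3 * ax - ay \<and>
          - sqrt 3 * x - y \<ge> - sqrt 3 * ax - ay" for x y
  proof -
    have "\<bar>sqrt 3 * x - sqrt 3 * ax\<bar> = sqrt 3 * \<bar>x - ax\<bar>"
      by (simp flip: right_diff_distrib add: abs_mult)
    then have "\<bar>x - ax\<bar> \<le> (ay - y) / sqrt 3 \<longleftrightarrow> \<bar>sqrt 3 * x - sqrt 3 * ax\<bar> \<le> ay - y"
      by (simp add: pos_le_divide_eq mult.commute)
    then show ?thesis unfolding up_triangle_def by (auto simp: abs_le_iff)
  qed
  then show ?thesis by (auto simp: tri1_def tri2_def tri3_def)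
qed

lemma down_triangle_of_bounds:
  assumes "c1 + c2 + c3 > 0"
  shows "\<exists>ax ay s. s > 0 \<and> down_triangle ax ay s = {p. tri1 p \<le> c1 \<and> tri2 p \<le> c2 \<and> tri3 p \<le> c3}"
proof -
  have t: "sqrt 3 > 0" "sqrt 3 * sqrt 3 = (3::real)" by auto
  define ax where "ax = (c2 - c3) / (2 * sqrt 3)"
  define ay where "ay = - (c2 + c3) / 2"
  define s where "s = (c1 + c2 + c3) / sqrt 3"
  have "2 * ay + s * sqrt 3 = c1" "sqrt 3 * ax - ay = c2" "- sqrt 3 * ax - ay = c3"
    using t by (simp_all add: ax_def ay_def s_def field_simps)
  then have "down_triangle ax ay s = {p. tri1 p \<le> c1 \<and> tri2 p \<le> c2 \<and> tri3 p \<le> c3}"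
    unfolding down_triangle_tri by simp
  moreover have "s > 0" using assms by (simp add: s_def)
  ultimately show ?thesis by blast
qed

lemma up_triangle_of_bounds:
  assumes "c1 + c2 + c3 < 0"
  shows "\<exists>ax ay s. s > 0 \<and> up_triangle ax ay s = {p. tri1 p \<ge> c1 \<and> tri2 p \<ge> c2 \<and> tri3 p \<ge> c3}"
proof -
  have t: "sqrt 3 > 0" "sqrt 3 * sqrt 3 = (3::real)" by auto
  define ax where "ax = (c2 - c3) / (2 * sqrt 3)"
  define ay where "ay = - (c2 + c3) / 2"
  define s where "s = - (c1 + c2 + c3) / sqrt 3"
  have "2 * ay - s * sqrt 3 = c1" "sqrt 3 * ax - ay = c2" "- sqrt 3 * ax - ay = c3"
    using t by (simp_all add: ax_def ay_def s_def field_simps)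
  then have "up_triangle ax ay s = {p. tri1 p \<ge> c1 \<and> tri2 p \<ge> c2 \<and> tri3 p \<ge> c3}"
    unfolding up_triangle_tri by simp
  moreover have "s > 0" using assms by (simp add: s_def)
  ultimately show ?thesis by blast
qed

text \<open>If p q is not an edge of the down-graph, the smallest down-triangle
through p and q contains a third point r of P, which is closer to both.\<close>

lemma shortcut_down:
  assumes gp: "general_position P" and pq: "p \<in> P" "q \<in> P" "p \<noteq> q"
    and not_edge: "\<not> G_down P p q"
  shows "\<exists>r\<in>P. tri_dist p r < tri_dist p q \<and> tri_dist r q < tri_dist p q"
proof -
  let ?T = "{x. tri1 x \<le> max (tri1 p) (tri1 q) \<and> tri2 x \<le> max (tri2 p) (tri2 q) \<and>
                tri3 x \<le> max (tri3 p) (tri3 q)}"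
  have "tri1 p \<noteq> tri1 q" using general_position_tri[OF gp pq] by simp
  then have "max (tri1 p) (tri1 q) + max (tri2 p) (tri2 q) + max (tri3 p) (tri3 q) > 0"
    using tri_sum[of p] tri_sum[of q] by (auto simp: max_def)
  then obtain ax ay s where "s > 0" and "down_triangle ax ay s = ?T"
    using down_triangle_of_bounds by blast
  with not_edge pq have "?T \<inter> P \<noteq> {p, q}" unfolding G_down_def by blast
  moreover have "p \<in> ?T" "q \<in> ?T" by auto
  ultimately obtain r where r: "r \<in> P" "r \<in> ?T" "r \<noteq> p" "r \<noteq> q" using pq by blast
  have "tri_dist p r < tri_dist p q"
    using tri_dist_decreases_max[OF gp pq(1,2) r(1) pq(3) r(4)] r(2) by auto
  moreover have "tri_dist q r < tri_dist q p"
    using tri_dist_decreases_max[OF gp pq(2,1) r(1) pq(3)[symmetric] r(3)] r(2)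
    by (auto simp: max.commute)
  ultimately show ?thesis using r(1) tri_dist_sym by metis
qed

lemma shortcut_up:
  assumes gp: "general_position P" and pq: "p \<in> P" "q \<in> P" "p \<noteq> q"
    and not_edge: "\<not> G_up P p q"
  shows "\<exists>r\<in>P. tri_dist p r < tri_dist p q \<and> tri_dist r q < tri_dist p q"
proof -
  let ?T = "{x. tri1 x \<ge> min (tri1 p) (tri1 q) \<and> tri2 x \<ge> min (tri2 p) (tri2 q) \<and>
                tri3 x \<ge> min (tri3 p) (tri3 q)}"
  have "tri1 p \<noteq> tri1 q" using general_position_tri[OF gp pq] by simp
  then have "min (tri1 p) (tri1 q) + min (tri2 p) (tri2 q) + min (tri3 p) (tri3 q) < 0"
    using tri_sum[of p] tri_sum[of q] by (auto simp: min_def)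
  then obtain ax ay s where "s > 0" and "up_triangle ax ay s = ?T"
    using up_triangle_of_bounds by blast
  with not_edge pq have "?T \<inter> P \<noteq> {p, q}" unfolding G_up_def by blast
  moreover have "p \<in> ?T" "q \<in> ?T" by auto
  ultimately obtain r where r: "r \<in> P" "r \<in> ?T" "r \<noteq> p" "r \<noteq> q" using pq by blast
  have "tri_dist p r < tri_dist p q"
    using tri_dist_decreases_min[OF gp pq(1,2) r(1) pq(3) r(4)] r(2) by auto
  moreover have "tri_dist q r < tri_dist q p"
    using tri_dist_decreases_min[OF gp pq(2,1) r(1) pq(3)[symmetric] r(3)] r(2)
    by (auto simp: min.commute)
  ultimately show ?thesis using r(1) tri_dist_sym by metis
qed

theorem lemma8:
  fixes P :: "point set"
  assumes "finite P" and "general_position P"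
  shows "connected_graph P (\<lambda>p q. G_down P p q \<and> G_up P p q)"
  using assms(1)
proof (rule connected_graph_by_shortcuts[where d = tri_dist])
  fix u v assume "u \<in> P" "v \<in> P" "u \<noteq> v" "\<not> (G_down P u v \<and> G_up P u v)"
  then show "\<exists>w\<in>P. tri_dist u w < tri_dist u v \<and> tri_dist w v < tri_dist u v"
    using shortcut_down[OF assms(2)] shortcut_up[OF assms(2)] by blast
qed

end
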